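(* The moment generating function $M(z)=\sum_{n\ge0}m_nz^n$ of the standard V-monotone Gaussian distribution (with moments $m_{2k}=|\mathcal{OV}^2(2k)|/k!=P_k(1)$, $m_{2k+1}=0$) satisfies, for $z\in(-\tfrac12,\tfrac12)$, $M(0)=1$ and $$M(z)=\Big[S\Big(\frac{1}{\sqrt{1-2z^2}}\Big)\Big]^{-1}\quad (z\neq0).$$
   Context: $T(t)=\int_t^1\frac{s\,ds}{s^2-s+1}=-\tfrac12\log(t^2-t+1)-\tfrac{\sqrt3}{3}\big[\arctan\big(\tfrac{2t-1}{\sqrt3}\big)-\tfrac{\pi}{6}\big]$. The function $t\mapsto e^{T(t)}$ is a strictly decreasing bijection from $[0,\infty)$ onto $(0,e^{\sqrt3\pi/9}]$, and $S:(0,e^{\sqrt3\pi/9}]\to[0,\infty)$ denotes its inverse. The polynomials $P_n$ are defined by $Q_0=P_0=1$, $Q_{n+1}(x)=\sum_{m=0}^n[\int_x^1Q_m]Q_{n-m}(x)$, $P_{n+1}(x)=\sum_{m=0}^n[\int_0^xP_m+\int_x^1Q_m]P_{n-m}(x)$ on $[0,1]$. $\mathcal{OV}^2(2k)$: non-crossing pair partitions of $[2k]$ with a bijective labeling by $[k]$ such that along every chain of successively nearest outer blocks the labels are strictly decreasing then strictly increasing. *)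

theory Defs
  imports "HOL-Analysis.Analysis"
begin

text \<open>The polynomials Q_n, P_n on [0,1], as real functions (values outside [0,1] are irrelevant).\<close>

function Qpol :: "nat \<Rightarrow> real \<Rightarrow> real" where
  "Qpol 0 x = 1"
| "Qpol (Suc n) x = (\<Sum>m\<le>n. integral {x..1} (Qpol m) * Qpol (n - m) x)"
  by pat_completeness auto
termination by (relation "Wellfounded.measure fst") auto

function Ppol :: "nat \<Rightarrow> real \<Rightarrow> real" where
  "Ppol 0 x = 1"
| "Ppol (Suc n) x =
     (\<Sum>m\<le>n. (integral {0..x} (Ppol m) + integral {x..1} (Qpol m)) * Ppol (n - m) x)"
  by pat_completeness auto
termination by (relation "Wellfounded.measure fst") auto

text \<open>T(t) = integral from t to 1 of s/(s^2-s+1), in the closed form given in the paper.\<close>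
definition Tfun :: "real \<Rightarrow> real" where
  "Tfun t = - (1/2) * ln (t^2 - t + 1)
            - (sqrt 3 / 3) * (arctan ((2*t - 1) / sqrt 3) - pi / 6)"

definition Sinv :: "real \<Rightarrow> real" where
  "Sinv y = (THE t. t \<ge> 0 \<and> exp (Tfun t) = y)"

definition vmom :: "nat \<Rightarrow> real" where
  "vmom n = (if even n then Ppol (n div 2) 1 else 0)"

end

theory Submission
  imports Defs
begin

text \<open>
  Put \<open>Q(x) = \<Sum>\<^sub>n Q\<^sub>n(x) w\<^sup>n\<close> and \<open>P(x) = \<Sum>\<^sub>n P\<^sub>n(x) w\<^sup>n\<close>. The recursions are Cauchy products, so
  \<open>Q = 1 + w (\<integral>\<^sub>x\<^sup>1 Q) Q\<close> and \<open>P = 1 + w (\<integral>\<^sub>0\<^sup>x P + \<integral>\<^sub>x\<^sup>1 Q) P\<close>; the Catalan numbers dominate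
  \<open>Q\<^sub>n\<close> and \<open>P\<^sub>n\<close> on \<open>[0,1]\<close>, so for \<open>0 \<le> w \<le> 1/4\<close> all series converge uniformly and may be
  integrated termwise. The reciprocals \<open>A = 1/Q\<close> and \<open>D = 1/P\<close> solve
  \<open>A' = w/A\<close>, \<open>D' = w/A - w/D\<close> with \<open>A(1) = 1\<close> and \<open>D(0) = A(0)\<close>. The first equation gives
  \<open>A(0)\<^sup>2 = 1 - 2w\<close>, and \<open>T(D/A) - log A\<close> is a first integral of the system, so
  \<open>T(D(1)) = -log \<surd>(1 - 2w)\<close>. Since \<open>M(z) = P(1)\<close> at \<open>w = z\<^sup>2\<close>, this is \<open>M(z) = 1/D(1) = 1/S(1/\<surd>(1 - 2z\<^sup>2))\<close>.
\<close>

fun catalan :: "nat \<Rightarrow> real" where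
  "catalan 0 = 1"
| "catalan (Suc n) = (\<Sum>m\<le>n. catalan m * catalan (n - m))"

lemma catalan_nonneg: "0 \<le> catalan n"
  by (induction n rule: catalan.induct) (auto intro!: sum_nonneg)

lemma sum_convolution_le_square:
  fixes a :: "nat \<Rightarrow> real"
  assumes "\<And>n. 0 \<le> a n"
  shows "(\<Sum>n<N. \<Sum>m\<le>n. a m * a (n - m)) \<le> (\<Sum>n<N. a n)\<^sup>2"
proof -
  have "(\<Sum>n<N. \<Sum>m\<le>n. a m * a (n - m)) = (\<Sum>(i,j)\<in>{(i,j). i + j < N}. a i * a j)"
    by (rule sum.triangle_reindex[symmetric])
  also have "\<dots> \<le> (\<Sum>(i,j)\<in>{..<N} \<times> {..<N}. a i * a j)"
    by (rule sum_mono2) (auto intro!: mult_nonneg_nonneg assms)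
  also have "\<dots> = (\<Sum>n<N. a n)\<^sup>2"
    by (simp add: power2_eq_square sum_product sum.cartesian_product)
  finally show ?thesis .
qed

lemma catalan_partial_sum_le_2:
  assumes "0 \<le> w" "w \<le> 1/4"
  shows "(\<Sum>n<N. catalan n * w^n) \<le> 2"
proof (induction N)
  case 0
  then show ?case by simp
next
  case (Suc N)
  define a where "a n = catalan n * w^n" for n
  have a_nonneg: "0 \<le> a n" for n
    using catalan_nonneg assms by (simp add: a_def)
  have "(\<Sum>n<Suc N. a n) = 1 + w * (\<Sum>n<N. \<Sum>m\<le>n. a m * a (n - m))"
    by (simp only: sum.lessThan_Suc_shift)
       (simp add: a_def sum_distrib_left sum_distrib_right algebra_simps power_add[symmetric])
  also have "\<dots> \<le> 1 + w * 2\<^sup>2"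
  proof -
    have "(\<Sum>n<N. \<Sum>m\<le>n. a m * a (n - m)) \<le> (\<Sum>n<N. a n)\<^sup>2"
      by (rule sum_convolution_le_square[OF a_nonneg])
    also have "\<dots> \<le> 2\<^sup>2"
      using Suc.IH a_nonneg by (intro power_mono) (auto simp: a_def intro: sum_nonneg)
    finally show ?thesis
      using assms by (intro add_left_mono mult_left_mono) auto
  qed
  finally show ?case
    using assms by (simp add: a_def)
qed

lemma summable_catalan:
  assumes "0 \<le> w" "w \<le> 1/4"
  shows "summable (\<lambda>n. catalan n * w^n)"
proof (rule bounded_imp_summable)
  show "0 \<le> catalan n * w^n" for n
    using assms catalan_nonneg by simp
  show "(\<Sum>k\<le>n. catalan k * w^k) \<le> 2" for n
    using catalan_partial_sum_le_2[OF assms, of "Suc n"] by (simp add: lessThan_Suc_atMost)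
qed

definition unit_bounded :: "real \<Rightarrow> (real \<Rightarrow> real) \<Rightarrow> bool" where
  "unit_bounded c f \<longleftrightarrow> continuous_on {0..1} f \<and> (\<forall>x\<in>{0..1}. 0 \<le> f x \<and> f x \<le> c)"

lemma unit_boundedI:
  assumes "continuous_on {0..1} f"
    and "\<And>x. x \<in> {0..1} \<Longrightarrow> 0 \<le> f x" "\<And>x. x \<in> {0..1} \<Longrightarrow> f x \<le> c"
  shows "unit_bounded c f"
  using assms by (simp add: unit_bounded_def)

lemma unit_boundedD:
  assumes "unit_bounded c f" "x \<in> {0..1}"
  shows "0 \<le> f x" "f x \<le> c"
  using assms by (auto simp: unit_bounded_def)

lemma unit_bounded_integral_bounds:
  assumes f: "unit_bounded c f" and x: "x \<in> {0..1}"
  shows "0 \<le> integral {0..x} f" "integral {0..x} f \<le> x * c"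
    and "0 \<le> integral {x..1} f" "integral {x..1} f \<le> (1 - x) * c"
proof -
  have cont: "continuous_on {0..1} f" and bounds: "\<And>y. y \<in> {0..1} \<Longrightarrow> 0 \<le> f y \<and> f y \<le> c"
    using f by (auto simp: unit_bounded_def)
  have int: "f integrable_on {0..x}" "f integrable_on {x..1}"
    using x by (auto intro: integrable_on_subinterval[OF integrable_continuous_real[OF cont]])
  show "0 \<le> integral {0..x} f" "0 \<le> integral {x..1} f"
    using int bounds x by (auto intro!: integral_nonneg)
  have "integral {0..x} f \<le> integral {0..x} (\<lambda>_. c)"
    using int bounds x by (intro integral_le) auto
  then show "integral {0..x} f \<le> x * c"
    using x by simp
  have "integral {x..1} f \<le> integral {x..1} (\<lambda>_. c)"
    using int bounds x by (intro integral_le) auto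
  then show "integral {x..1} f \<le> (1 - x) * c"
    using x by simp
qed

lemma continuous_on_integral_unit:
  fixes f :: "real \<Rightarrow> real"
  assumes "continuous_on {0..1} f"
  shows "continuous_on {0..1} (\<lambda>x. integral {0..x} f)" "continuous_on {0..1} (\<lambda>x. integral {x..1} f)"
  using indefinite_integral_continuous_1 indefinite_integral_continuous_1'
    integrable_continuous_real[OF assms] by auto

lemma unit_bounded_integral_upper:
  assumes "unit_bounded c f"
  shows "unit_bounded c (\<lambda>x. integral {x..1} f)"
proof (rule unit_boundedI)
  show "continuous_on {0..1} (\<lambda>x. integral {x..1} f)"
    using assms continuous_on_integral_unit by (auto simp: unit_bounded_def)
  fix x :: real assume x: "x \<in> {0..1}"
  show "0 \<le> integral {x..1} f"
    using unit_bounded_integral_bounds(3)[OF assms x] .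
  have "0 \<le> c"
    using unit_boundedD[OF assms, of 0] by simp
  then show "integral {x..1} f \<le> c"
    using unit_bounded_integral_bounds(4)[OF assms x] x
    by (auto intro: order.trans[OF _ mult_left_le_one_le])
qed

lemma unit_bounded_integral_split:
  assumes "unit_bounded c f" "unit_bounded c g"
  shows "unit_bounded c (\<lambda>x. integral {0..x} f + integral {x..1} g)"
proof (rule unit_boundedI)
  show "continuous_on {0..1} (\<lambda>x. integral {0..x} f + integral {x..1} g)"
    using assms continuous_on_integral_unit by (auto simp: unit_bounded_def intro!: continuous_on_add)
  fix x :: real assume x: "x \<in> {0..1}"
  note f = unit_bounded_integral_bounds[OF assms(1) x] and g = unit_bounded_integral_bounds[OF assms(2) x]
  show "0 \<le> integral {0..x} f + integral {x..1} g"
    using f g by simp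
  have "integral {0..x} f + integral {x..1} g \<le> x * c + (1 - x) * c"
    using f g by (intro add_mono)
  then show "integral {0..x} f + integral {x..1} g \<le> c"
    by (simp add: algebra_simps)
qed

lemma unit_bounded_convolution:
  assumes g: "\<And>m. m \<le> k \<Longrightarrow> unit_bounded (catalan m) (g m)"
    and f: "\<And>m. m \<le> k \<Longrightarrow> unit_bounded (catalan m) (f m)"
  shows "unit_bounded (catalan (Suc k)) (\<lambda>x. \<Sum>m\<le>k. g m x * f (k - m) x)"
proof (rule unit_boundedI)
  show "continuous_on {0..1} (\<lambda>x. \<Sum>m\<le>k. g m x * f (k - m) x)"
    using f g by (auto simp: unit_bounded_def intro!: continuous_on_sum continuous_on_mult)
  fix x :: real assume x: "x \<in> {0..1}"
  show "0 \<le> (\<Sum>m\<le>k. g m x * f (k - m) x)"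
    using unit_boundedD[OF g x] unit_boundedD[OF f x] by (auto intro!: sum_nonneg)
  show "(\<Sum>m\<le>k. g m x * f (k - m) x) \<le> catalan (Suc k)"
    using unit_boundedD[OF g x] unit_boundedD[OF f x]
    by (auto intro!: sum_mono mult_mono catalan_nonneg)
qed

lemma unit_bounded_Qpol: "unit_bounded (catalan n) (Qpol n)"
proof (induction n rule: less_induct)
  case (less n)
  show ?case
  proof (cases n)
    case 0
    then show ?thesis by (simp add: unit_bounded_def)
  next
    case (Suc k)
    have "unit_bounded (catalan (Suc k)) (\<lambda>x. \<Sum>m\<le>k. integral {x..1} (Qpol m) * Qpol (k - m) x)"
      using less Suc by (intro unit_bounded_convolution unit_bounded_integral_upper) auto
    then show ?thesis
      using Suc by simp
  qed
qed

lemma unit_bounded_Ppol: "unit_bounded (catalan n) (Ppol n)"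
proof (induction n rule: less_induct)
  case (less n)
  show ?case
  proof (cases n)
    case 0
    then show ?thesis by (simp add: unit_bounded_def)
  next
    case (Suc k)
    have "unit_bounded (catalan (Suc k))
        (\<lambda>x. \<Sum>m\<le>k. (integral {0..x} (Ppol m) + integral {x..1} (Qpol m)) * Ppol (k - m) x)"
      using less Suc
      by (intro unit_bounded_convolution unit_bounded_integral_split unit_bounded_Qpol) auto
    then show ?thesis
      using Suc by simp
  qed
qed

lemma
  fixes f :: "nat \<Rightarrow> real \<Rightarrow> 'a::banach"
  assumes cont: "\<And>n. continuous_on {a..b} (f n)"
    and bound: "\<And>n x. x \<in> {a..b} \<Longrightarrow> norm (f n x) \<le> M n" and M: "summable M"
  shows continuous_on_suminf_Weierstrass: "continuous_on {a..b} (\<lambda>x. \<Sum>n. f n x)"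
    and sums_integral_suminf_Weierstrass: "(\<lambda>n. integral {a..b} (f n)) sums integral {a..b} (\<lambda>x. \<Sum>n. f n x)"
proof -
  have lim: "uniform_limit {a..b} (\<lambda>N x. \<Sum>n<N. f n x) (\<lambda>x. \<Sum>n. f n x) sequentially"
    by (rule Weierstrass_m_test[OF bound M])
  have partial_cont: "continuous_on {a..b} (\<lambda>x. \<Sum>n<N. f n x)" for N
    by (intro continuous_on_sum cont)
  show "continuous_on {a..b} (\<lambda>x. \<Sum>n. f n x)"
    using uniform_limit_theorem[OF _ lim] partial_cont by (auto intro: always_eventually)
  obtain I J where I: "\<And>N. ((\<lambda>x. \<Sum>n<N. f n x) has_integral I N) {a..b}"
    and J: "((\<lambda>x. \<Sum>n. f n x) has_integral J) {a..b}" and "I \<longlonglongrightarrow> J"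
    using uniform_limit_integral[OF lim partial_cont] by auto
  moreover have "I = (\<lambda>N. \<Sum>n<N. integral {a..b} (f n))"
  proof
    fix N
    have "I N = integral {a..b} (\<lambda>x. \<Sum>n<N. f n x)"
      using I[of N] by (simp add: integral_unique)
    then show "I N = (\<Sum>n<N. integral {a..b} (f n))"
      using integrable_continuous_real[OF cont] by (simp add: integral_sum)
  qed
  ultimately show "(\<lambda>n. integral {a..b} (f n)) sums integral {a..b} (\<lambda>x. \<Sum>n. f n x)"
    by (simp add: sums_def integral_unique)
qed

lemma power_series_convolution_equation:
  fixes p q :: "nat \<Rightarrow> 'a::{real_normed_field,banach}"
  assumes p0: "p 0 = 1" and rec: "\<And>k. p (Suc k) = (\<Sum>i\<le>k. q i * p (k - i))"
    and p: "summable (\<lambda>n. norm (p n * w^n))" and q: "summable (\<lambda>n. norm (q n * w^n))"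
  shows "(\<Sum>n. p n * w^n) = 1 + w * (\<Sum>n. q n * w^n) * (\<Sum>n. p n * w^n)"
proof -
  have "(\<lambda>k. \<Sum>i\<le>k. q i * w^i * (p (k - i) * w^(k - i))) sums ((\<Sum>n. q n * w^n) * (\<Sum>n. p n * w^n))"
    using Cauchy_product_sums[OF q p] by simp
  moreover have "(\<Sum>i\<le>k. q i * w^i * (p (k - i) * w^(k - i))) = p (Suc k) * w^k" for k
    unfolding rec sum_distrib_right
    by (intro sum.cong refl) (simp add: algebra_simps flip: power_add)
  ultimately have "(\<lambda>k. p (Suc k) * w^Suc k) sums (w * ((\<Sum>n. q n * w^n) * (\<Sum>n. p n * w^n)))"
    by (auto dest: sums_mult[where c=w] simp: algebra_simps)
  then have "(\<lambda>n. p n * w^n) sums (w * ((\<Sum>n. q n * w^n) * (\<Sum>n. p n * w^n)) + 1)"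
    using sums_Suc_iff[of "\<lambda>n. p n * w^n"] p0 by simp
  then show ?thesis
    by (simp add: sums_iff algebra_simps)
qed

definition genfun :: "(nat \<Rightarrow> real \<Rightarrow> real) \<Rightarrow> real \<Rightarrow> real \<Rightarrow> real" where
  "genfun f w x = (\<Sum>n. f n x * w^n)"

context
  fixes w :: real
  assumes w: "0 \<le> w" "w \<le> 1/4"
begin

lemma
  assumes f: "\<And>n. unit_bounded (catalan n) (f n)"
  shows summable_genfun: "x \<in> {0..1} \<Longrightarrow> summable (\<lambda>n. norm (f n x * w^n))"
    and sums_genfun: "x \<in> {0..1} \<Longrightarrow> (\<lambda>n. f n x * w^n) sums genfun f w x"
    and continuous_on_genfun: "continuous_on {0..1} (genfun f w)"
    and genfun_nonneg: "x \<in> {0..1} \<Longrightarrow> 0 \<le> genfun f w x"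
    and sums_integral_genfun: "0 \<le> a \<Longrightarrow> b \<le> 1 \<Longrightarrow>
          (\<lambda>n. integral {a..b} (f n) * w^n) sums integral {a..b} (genfun f w)"
proof -
  have bound: "norm (f n x * w^n) \<le> catalan n * w^n" if "x \<in> {0..1}" for n x
    using unit_boundedD[OF f that, of n] w by (simp add: abs_mult mult_right_mono)
  have cont: "continuous_on {0..1} (\<lambda>x. f n x * w^n)" for n
    using f by (auto simp: unit_bounded_def intro!: continuous_on_mult_right)
  note catalan = summable_catalan[OF w]
  show summable: "summable (\<lambda>n. norm (f n x * w^n))" if "x \<in> {0..1}" for x
    using bound[OF that] by (intro summable_comparison_test[OF _ catalan]) auto
  show "(\<lambda>n. f n x * w^n) sums genfun f w x" if "x \<in> {0..1}"
    unfolding genfun_def by (rule summable_sums[OF summable_norm_cancel[OF summable[OF that]]])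
  show "continuous_on {0..1} (genfun f w)"
    unfolding genfun_def[abs_def] by (rule continuous_on_suminf_Weierstrass[OF cont bound catalan])
  show "0 \<le> genfun f w x" if "x \<in> {0..1}"
    unfolding genfun_def using unit_boundedD(1)[OF f that] w summable_norm_cancel[OF summable[OF that]]
    by (intro suminf_nonneg) auto
  assume ab: "0 \<le> a" "b \<le> 1"
  have "(\<lambda>n. integral {a..b} (\<lambda>x. f n x * w^n)) sums integral {a..b} (genfun f w)"
    unfolding genfun_def[abs_def] using ab
    by (intro sums_integral_suminf_Weierstrass[OF _ _ catalan] continuous_on_subset[OF cont] bound) auto
  then show "(\<lambda>n. integral {a..b} (f n) * w^n) sums integral {a..b} (genfun f w)"
    by simp
qed

lemma genfun_Qpol_equation:
  assumes x: "x \<in> {0..1}"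
  shows "genfun Qpol w x = 1 + w * integral {x..1} (genfun Qpol w) * genfun Qpol w x"
proof -
  have "(\<Sum>n. integral {x..1} (Qpol n) * w^n) = integral {x..1} (genfun Qpol w)"
    using sums_integral_genfun[OF unit_bounded_Qpol] x by (simp add: sums_iff)
  moreover have "genfun Qpol w x =
      1 + w * (\<Sum>n. integral {x..1} (Qpol n) * w^n) * genfun Qpol w x"
    unfolding genfun_def
    using summable_genfun[OF unit_bounded_Qpol x]
      summable_genfun[OF unit_bounded_integral_upper[OF unit_bounded_Qpol] x]
    by (intro power_series_convolution_equation) simp_all
  ultimately show ?thesis
    by simp
qed

lemma genfun_Ppol_equation:
  assumes x: "x \<in> {0..1}"
  shows "genfun Ppol w x =
    1 + w * (integral {0..x} (genfun Ppol w) + integral {x..1} (genfun Qpol w)) * genfun Ppol w x"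
proof -
  have "(\<Sum>n. (integral {0..x} (Ppol n) + integral {x..1} (Qpol n)) * w^n) =
      integral {0..x} (genfun Ppol w) + integral {x..1} (genfun Qpol w)"
    using sums_add[OF sums_integral_genfun[OF unit_bounded_Ppol] sums_integral_genfun[OF unit_bounded_Qpol]] x
    by (simp add: sums_iff algebra_simps)
  moreover have "genfun Ppol w x =
      1 + w * (\<Sum>n. (integral {0..x} (Ppol n) + integral {x..1} (Qpol n)) * w^n) * genfun Ppol w x"
    unfolding genfun_def
    using summable_genfun[OF unit_bounded_Ppol x]
      summable_genfun[OF unit_bounded_integral_split[OF unit_bounded_Ppol unit_bounded_Qpol] x]
    by (intro power_series_convolution_equation) simp_all
  ultimately show ?thesis
    by simp
qed

end

lemma square_minus_self_plus_one_pos: "0 < (t::real)^2 - t + 1"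
proof -
  have "t^2 - t + 1 = (t - 1/2)^2 + 3/4"
    by (simp add: power2_eq_square algebra_simps)
  then show ?thesis
    by (simp add: add_nonneg_pos)
qed

lemma Tfun_has_real_derivative: "(Tfun has_real_derivative - t / (t^2 - t + 1)) (at t)"
proof -
  define D where "D = t^2 - t + 1"
  have D: "0 < D"
    unfolding D_def by (rule square_minus_self_plus_one_pos)
  have ln': "((\<lambda>t. ln (t^2 - t + 1)) has_real_derivative (2*t - 1) / D) (at t)"
    using D unfolding D_def by (auto intro!: derivative_eq_intros simp: field_simps)
  have square: "1 + ((2*t - 1) / sqrt 3)^2 = 4 * D / 3"
    by (simp add: D_def power_divide power2_eq_square field_simps)
  have "((\<lambda>t. (2*t - 1) / sqrt 3) has_real_derivative 2 / sqrt 3) (at t)"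
    by (auto intro!: derivative_eq_intros simp: field_simps)
  from DERIV_chain2[OF DERIV_arctan this]
  have "((\<lambda>t. arctan ((2*t - 1) / sqrt 3)) has_real_derivative
      inverse (1 + ((2*t - 1) / sqrt 3)^2) * (2 / sqrt 3)) (at t)" .
  also have "inverse (1 + ((2*t - 1) / sqrt 3)^2) * (2 / sqrt 3) = 3 / (2 * sqrt 3 * D)"
    unfolding square using D by (simp add: field_simps)
  also have "\<dots> = (sqrt 3 / 2) / D"
    using D by (simp add: field_simps flip: real_sqrt_mult)
  finally have arctan': "((\<lambda>t. arctan ((2*t - 1) / sqrt 3)) has_real_derivative (sqrt 3 / 2) / D) (at t)" .
  have "(Tfun has_real_derivative - (1/2) * ((2*t - 1) / D) - sqrt 3 / 3 * ((sqrt 3 / 2) / D - 0)) (at t)"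
    unfolding Tfun_def[abs_def] by (intro DERIV_diff DERIV_cmult ln' arctan' DERIV_const)
  also have "- (1/2) * ((2*t - 1) / D) - sqrt 3 / 3 * ((sqrt 3 / 2) / D - 0) = - t / D"
    using D by (simp add: field_simps)
  finally show ?thesis
    unfolding D_def .
qed

lemma Tfun_1 [simp]: "Tfun 1 = 0"
proof -
  have "arctan (1 / sqrt 3) = pi / 6"
    using arctan_tan[of "pi/6"] tan_30 by simp
  then show ?thesis
    unfolding Tfun_def by simp
qed

lemma continuous_on_Tfun: "continuous_on S Tfun"
  using Tfun_has_real_derivative DERIV_isCont continuous_at_imp_continuous_on by blast

lemma Tfun_strict_decreasing:
  assumes "0 \<le> a" "a < b"
  shows "Tfun b < Tfun a"
proof (rule DERIV_neg_imp_decreasing_open[OF assms(2) _ continuous_on_Tfun])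
  fix x :: real assume "a < x" "x < b"
  then show "\<exists>y. DERIV Tfun x :> y \<and> y < 0"
    using assms square_minus_self_plus_one_pos[of x]
    by (intro exI[of _ "- x / (x\<^sup>2 - x + 1)"] conjI Tfun_has_real_derivative) auto
qed

lemma Sinv_exp_Tfun:
  assumes "0 \<le> t"
  shows "Sinv (exp (Tfun t)) = t"
  unfolding Sinv_def
proof (rule the_equality)
  fix s assume "0 \<le> s \<and> exp (Tfun s) = exp (Tfun t)"
  then show "s = t"
    using Tfun_strict_decreasing[of s t] Tfun_strict_decreasing[of t s] assms
    by (cases s t rule: linorder_cases) auto
qed (use assms in simp)

lemma Tfun_ratio_minus_ln_has_derivative_0:
  fixes A D :: "real \<Rightarrow> real"
  assumes A': "(A has_real_derivative w / A x) (at x)"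
    and D': "(D has_real_derivative w / A x - w / D x) (at x)"
    and pos: "0 < A x" "0 < D x"
  shows "((\<lambda>x. Tfun (D x / A x) - ln (A x)) has_real_derivative 0) (at x)"
proof -
  define a d where "a = A x" and "d = D x"
  define K where "K = d\<^sup>2 - d * a + a\<^sup>2"
  have a: "0 < a" and d: "0 < d"
    using pos by (simp_all add: a_def d_def)
  have K: "0 < K"
    using square_minus_self_plus_one_pos[of "d / a"] a by (simp add: K_def field_simps power2_eq_square)
  have ratio': "((\<lambda>x. D x / A x) has_real_derivative - w * K / (a^3 * d)) (at x)"
  proof -
    have "((\<lambda>x. D x / A x) has_real_derivative ((w/a - w/d) * a - d * (w/a)) / (a * a)) (at x)"
      using DERIV_divide[OF D' A'] a by (simp add: a_def d_def)
    also have "((w/a - w/d) * a - d * (w/a)) / (a * a) = - w * K / (a^3 * d)"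
      using a d by (simp add: K_def field_simps power2_eq_square power3_eq_cube)
    finally show ?thesis .
  qed
  have "((\<lambda>x. Tfun (D x / A x)) has_real_derivative
      - (d/a) / ((d/a)\<^sup>2 - d/a + 1) * (- w * K / (a^3 * d))) (at x)"
    using DERIV_chain2[OF Tfun_has_real_derivative ratio'] by (simp add: a_def d_def)
  moreover have "((\<lambda>x. ln (A x)) has_real_derivative inverse a * (w / a)) (at x)"
    using DERIV_chain2[OF DERIV_ln[OF pos(1)] A'] by (simp add: a_def)
  moreover have "(d/a)\<^sup>2 - d/a + 1 = K / a\<^sup>2"
    using a by (simp add: K_def field_simps power2_eq_square)
  then have "- (d/a) / ((d/a)\<^sup>2 - d/a + 1) * (- w * K / (a^3 * d)) = inverse a * (w / a)"
    using a d K by (simp add: field_simps power2_eq_square power3_eq_cube)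
  ultimately show ?thesis
    using DERIV_diff by fastforce
qed

lemma
  fixes f :: "real \<Rightarrow> real"
  assumes "continuous_on {0..1} f" "0 < x" "x < 1"
  shows has_real_derivative_integral_lower_unit: "((\<lambda>u. integral {0..u} f) has_real_derivative f x) (at x)"
    and has_real_derivative_integral_upper_unit: "((\<lambda>u. integral {u..1} f) has_real_derivative - f x) (at x)"
  using integral_has_real_derivative[OF assms(1), of x] integral_has_real_derivative'[OF assms(1), of x]
    assms(2,3) at_within_Icc_at[of 0 x 1]
  by auto

text \<open>By the functional equations these are \<open>1/Q\<close> and \<open>1/P\<close>; the integral form makes them visibly
  differentiable.\<close>

definition Qrecip :: "real \<Rightarrow> real \<Rightarrow> real" where
  "Qrecip w x = 1 - w * integral {x..1} (genfun Qpol w)"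

definition Precip :: "real \<Rightarrow> real \<Rightarrow> real" where
  "Precip w x = Qrecip w x - w * integral {0..x} (genfun Ppol w)"

lemma Qrecip_1: "Qrecip w 1 = 1"
  by (simp add: Qrecip_def)

lemma Precip_0: "Precip w 0 = Qrecip w 0"
  by (simp add: Precip_def)

lemma pos_if_nonneg_mult_eq_1:
  fixes g r :: real
  assumes "0 \<le> g" "g * r = 1"
  shows "0 < r"
  using assms mult_nonneg_nonpos[of g r] by (cases "0 < r") auto

context
  fixes w :: real
  assumes w: "0 \<le> w" "w \<le> 1/4"
begin

lemma genfun_Qpol_mult_Qrecip: "x \<in> {0..1} \<Longrightarrow> genfun Qpol w x * Qrecip w x = 1"
  using genfun_Qpol_equation[OF w] unfolding Qrecip_def by (simp add: algebra_simps)

lemma genfun_Ppol_mult_Precip: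
  assumes "x \<in> {0..1}"
  shows "genfun Ppol w x * Precip w x = 1"
proof -
  have "genfun Ppol w x * Precip w x =
      genfun Ppol w x - w * (integral {0..x} (genfun Ppol w) + integral {x..1} (genfun Qpol w)) * genfun Ppol w x"
    unfolding Precip_def Qrecip_def by (simp add: algebra_simps)
  also have "\<dots> = 1"
    using genfun_Ppol_equation[OF w assms] by linarith
  finally show ?thesis .
qed

lemma Qrecip_pos: "x \<in> {0..1} \<Longrightarrow> 0 < Qrecip w x"
  by (rule pos_if_nonneg_mult_eq_1[OF genfun_nonneg[OF w unit_bounded_Qpol] genfun_Qpol_mult_Qrecip])

lemma Precip_pos: "x \<in> {0..1} \<Longrightarrow> 0 < Precip w x"
  by (rule pos_if_nonneg_mult_eq_1[OF genfun_nonneg[OF w unit_bounded_Ppol] genfun_Ppol_mult_Precip])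

lemma continuous_on_Qrecip: "continuous_on {0..1} (Qrecip w)"
  unfolding Qrecip_def[abs_def]
  by (intro continuous_on_diff continuous_on_mult continuous_on_const continuous_on_integral_unit
      continuous_on_genfun[OF w unit_bounded_Qpol])

lemma continuous_on_Precip: "continuous_on {0..1} (Precip w)"
  unfolding Precip_def[abs_def]
  by (intro continuous_on_diff continuous_on_mult continuous_on_const continuous_on_integral_unit
      continuous_on_Qrecip continuous_on_genfun[OF w unit_bounded_Ppol])

lemma Qrecip_has_real_derivative:
  assumes "0 < x" "x < 1"
  shows "(Qrecip w has_real_derivative w / Qrecip w x) (at x)"
proof -
  have "(Qrecip w has_real_derivative 0 - w * - genfun Qpol w x) (at x)"
    unfolding Qrecip_def[abs_def]
    by (intro DERIV_diff DERIV_const DERIV_cmult has_real_derivative_integral_upper_unit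
        continuous_on_genfun[OF w unit_bounded_Qpol] assms)
  moreover have "genfun Qpol w x = 1 / Qrecip w x"
    using genfun_Qpol_mult_Qrecip[of x] Qrecip_pos[of x] assms by (simp add: field_simps)
  ultimately show ?thesis
    by simp
qed

lemma Precip_has_real_derivative:
  assumes "0 < x" "x < 1"
  shows "(Precip w has_real_derivative w / Qrecip w x - w / Precip w x) (at x)"
proof -
  have "(Precip w has_real_derivative w / Qrecip w x - w * genfun Ppol w x) (at x)"
    unfolding Precip_def[abs_def]
    by (intro DERIV_diff DERIV_cmult Qrecip_has_real_derivative has_real_derivative_integral_lower_unit
        continuous_on_genfun[OF w unit_bounded_Ppol] assms)
  moreover have "genfun Ppol w x = 1 / Precip w x"
    using genfun_Ppol_mult_Precip[of x] Precip_pos[of x] assms by (simp add: field_simps)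
  ultimately show ?thesis
    by simp
qed

lemma Qrecip_0: "Qrecip w 0 = sqrt (1 - 2 * w)"
proof -
  define H where "H x = (Qrecip w x)\<^sup>2 - 2 * w * x" for x
  have "H 1 = H 0"
  proof (rule DERIV_isconst_end[of 0 1 H])
    show "continuous_on {0..1} H"
      unfolding H_def[abs_def]
      by (intro continuous_on_diff continuous_on_power continuous_on_mult continuous_on_const
          continuous_on_id continuous_on_Qrecip)
    fix x :: real assume x: "0 < x" "x < 1"
    have "(H has_real_derivative 2 * Qrecip w x * (w / Qrecip w x) - 2 * w) (at x)"
      unfolding H_def[abs_def] using Qrecip_has_real_derivative[OF x]
      by (auto intro!: derivative_eq_intros)
    then show "(H has_real_derivative 0) (at x)"
      using Qrecip_pos[of x] x by simp
  qed simp
  then have "(Qrecip w 0)\<^sup>2 = 1 - 2 * w"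
    by (simp add: H_def Qrecip_1)
  then show ?thesis
    using Qrecip_pos[of 0] by (simp add: real_sqrt_unique)
qed

lemma exp_Tfun_Precip_1: "exp (Tfun (Precip w 1)) = 1 / sqrt (1 - 2 * w)"
proof -
  define G where "G x = Tfun (Precip w x / Qrecip w x) - ln (Qrecip w x)" for x
  have "G 1 = G 0"
  proof (rule DERIV_isconst_end[of 0 1 G])
    have "continuous_on {0..1} (\<lambda>x. Precip w x / Qrecip w x)"
      using Qrecip_pos by (intro continuous_on_divide continuous_on_Qrecip continuous_on_Precip) force
    moreover have "continuous_on {0..1} (\<lambda>x. ln (Qrecip w x))"
      using Qrecip_pos by (intro continuous_on_ln continuous_on_Qrecip) force
    ultimately show "continuous_on {0..1} G"
      unfolding G_def[abs_def]
      by (intro continuous_on_diff continuous_on_compose2[OF continuous_on_Tfun, of _ _ UNIV]) auto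
    fix x :: real assume x: "0 < x" "x < 1"
    show "(G has_real_derivative 0) (at x)"
      unfolding G_def[abs_def] using Qrecip_pos[of x] Precip_pos[of x] x
      by (intro Tfun_ratio_minus_ln_has_derivative_0[OF Qrecip_has_real_derivative Precip_has_real_derivative])
        auto
  qed simp
  then have "Tfun (Precip w 1) = - ln (sqrt (1 - 2 * w))"
    using Qrecip_pos[of 0] by (simp add: G_def Qrecip_1 Precip_0 Qrecip_0)
  then show ?thesis
    using w by (simp add: exp_minus inverse_eq_divide)
qed

end

lemma vmom_sums_iff: "(\<lambda>n. vmom n * z^n) sums s \<longleftrightarrow> (\<lambda>k. Ppol k 1 * (z\<^sup>2)^k) sums s"
proof -
  have "(\<lambda>k. vmom (2 * k) * z^(2 * k)) sums s \<longleftrightarrow> (\<lambda>n. vmom n * z^n) sums s"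
    by (rule sums_mono_reindex) (auto simp: strict_mono_def vmom_def elim!: evenE)
  then show ?thesis
    by (simp add: vmom_def power_mult)
qed

theorem mainTheorem4:
  fixes z :: real
  assumes "-1/2 < z" and "z < 1/2"
  shows "(\<lambda>n. vmom n * z ^ n) sums
           (if z = 0 then 1 else inverse (Sinv (1 / sqrt (1 - 2 * z^2))))"
proof (cases "z = 0")
  case True
  then show ?thesis
    using powser_sums_zero[of vmom] by (simp add: vmom_def)
next
  case False
  define w where "w = z\<^sup>2"
  have "0 < (1/2 - z) * (1/2 + z)"
    using assms by (intro mult_pos_pos) auto
  then have w: "0 \<le> w" "w \<le> 1/4"
    by (auto simp: w_def power2_eq_square algebra_simps)
  have "Sinv (1 / sqrt (1 - 2 * w)) = Precip w 1"
    using Sinv_exp_Tfun[of "Precip w 1"] Precip_pos[OF w, of 1] exp_Tfun_Precip_1[OF w] by simp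
  moreover have "genfun Ppol w 1 = inverse (Precip w 1)"
    using genfun_Ppol_mult_Precip[OF w, of 1] Precip_pos[OF w, of 1] by (simp add: field_simps)
  moreover have "(\<lambda>k. Ppol k 1 * w^k) sums genfun Ppol w 1"
    by (rule sums_genfun[OF w unit_bounded_Ppol]) simp
  ultimately show ?thesis
    using False by (simp add: vmom_sums_iff w_def)
qed

end
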